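(* In the Node-Capacitated Clique model, there is an algorithm (the Aggregate-and-Broadcast Algorithm) that solves every Aggregate-and-Broadcast Problem in $O(\log n)$ rounds: given a distributive aggregate function $f$ and a set $A\subseteq V$ in which each member of $A$ stores exactly one input value, at the end every node of $V$ knows $f(\text{multiset of inputs of } A)$.
   Context: Node-Capacitated Clique model: a set $V$ of $n$ nodes with unique identifiers from $\{0,\dots,n-1\}$; every node knows the identifiers of all nodes. Computation proceeds in synchronous rounds; in each round every node may perform arbitrary local computation and send distinct messages of $O(\log n)$ bits each to up to $O(\log n)$ other nodes; messages are received at the beginning of the next round. A node can receive at most $O(\log n)$ messages per round; if more are sent to it, it receives an arbitrary subset of $O(\log n)$ of them and the rest are dropped. An aggregate function $f$ maps a multiset $S$ of values to a value $f(S)$; it is distributive if there is an aggregate function $g$ such that for every multiset $S$ and every partition $S_1,\dots,S_\ell$ of $S$, $f(S)=g(f(S_1),\dots,f(S_\ell))$ (e.g. MAX, MIN, SUM). *)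

theory Defs
  imports Complex_Main "HOL-Library.Multiset"
begin

type_synonym msg = "bool list"

type_synonym state = "bool list list"

definition distributive :: "('a multiset \<Rightarrow> 'a) \<Rightarrow> bool" where
  "distributive f \<longleftrightarrow>
     (\<exists>g :: 'a multiset \<Rightarrow> 'a. \<forall>S Ss.
        (sum_list Ss = S \<and> (\<forall>X\<in>set Ss. X \<noteq> {#})) \<longrightarrow> f S = g (mset (map f Ss)))"

(* A deterministic node program (all nodes run the same program, parametrised by
   their own identifier).
   ncc_init v inp   : initial state of node v with input inp (None if v has no input)
   ncc_step v s R   : local computation of node v in a round, in state s, having
                      received the set R of (sender, message) pairs; returns the new
                      state and the outgoing messages (destination \<mapsto> message)
   ncc_out s        : the value the node knows (claims as the result) in state s *)
record 's ncc_alg =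
  ncc_init :: "nat \<Rightarrow> bool list option \<Rightarrow> 's"
  ncc_step :: "nat \<Rightarrow> 's \<Rightarrow> (nat \<times> msg) set \<Rightarrow> 's \<times> (nat \<Rightarrow> msg option)"
  ncc_out  :: "'s \<Rightarrow> bool list option"

definition ncc_sent :: "nat \<Rightarrow> 's ncc_alg \<Rightarrow> (nat \<Rightarrow> 's) \<Rightarrow> (nat \<Rightarrow> (nat \<times> msg) set)
                        \<Rightarrow> nat \<Rightarrow> (nat \<times> msg) set" where
  "ncc_sent n P s r w = {(v, m). v < n \<and> snd (ncc_step P v (s v) (r v)) w = Some m}"

(* An execution in the NCC with n nodes and capacity cap (max. number of messages
   received per round); st t v = state of v after t rounds, inb t v = messages
   available to v at the beginning of round t+1.  If more than cap messages are
   sent to a node, it receives an arbitrary subset of at most cap of them. *)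
definition ncc_exec :: "nat \<Rightarrow> nat \<Rightarrow> 's ncc_alg \<Rightarrow> (nat \<Rightarrow> bool list option)
      \<Rightarrow> (nat \<Rightarrow> nat \<Rightarrow> 's) \<Rightarrow> (nat \<Rightarrow> nat \<Rightarrow> (nat \<times> msg) set) \<Rightarrow> bool" where
  "ncc_exec n cap P inp st inb \<longleftrightarrow>
     (\<forall>v<n. st 0 v = ncc_init P v (inp v) \<and> inb 0 v = {}) \<and>
     (\<forall>t. \<forall>v<n. st (Suc t) v = fst (ncc_step P v (st t v) (inb t v))) \<and>
     (\<forall>t. \<forall>w<n.
        inb (Suc t) w \<subseteq> ncc_sent n P (st t) (inb t) w \<and>
        card (inb (Suc t) w) \<le> cap \<and>
        (card (ncc_sent n P (st t) (inb t) w) \<le> cap \<longrightarrow>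
           inb (Suc t) w = ncc_sent n P (st t) (inb t) w))"

definition ncc_respects :: "nat \<Rightarrow> nat \<Rightarrow> 's ncc_alg
      \<Rightarrow> (nat \<Rightarrow> nat \<Rightarrow> 's) \<Rightarrow> (nat \<Rightarrow> nat \<Rightarrow> (nat \<times> msg) set) \<Rightarrow> nat \<Rightarrow> bool" where
  "ncc_respects n cap P st inb T \<longleftrightarrow>
     (\<forall>t<T. \<forall>v<n. let out = snd (ncc_step P v (st t v) (inb t v)) in
        finite (dom out) \<and> dom out \<subseteq> {..<n} - {v} \<and> card (dom out) \<le> cap \<and>
        (\<forall>m\<in>ran out. length m \<le> cap))"

definition ncc_solves :: "nat \<Rightarrow> nat \<Rightarrow> 's ncc_alg \<Rightarrow> (nat \<Rightarrow> bool list option)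
      \<Rightarrow> nat \<Rightarrow> bool list \<Rightarrow> bool" where
  "ncc_solves n cap P inp T res \<longleftrightarrow>
     (\<forall>st inb. ncc_exec n cap P inp st inb \<longrightarrow>
        ncc_respects n cap P st inb T \<and> (\<forall>v<n. ncc_out P (st T v) = Some res))"

definition ncc_cap :: "real \<Rightarrow> nat \<Rightarrow> nat" where
  "ncc_cap \<kappa> n = nat \<lceil>\<kappa> * log 2 (real n)\<rceil>"

end

theory Submission
  imports Defs "HOL-Library.Log_Nat"
begin

text \<open>Nodes 0, ..., n - 1 are the leaves of a binomial tree of depth L = ceillog2 n.  In aggregation
  level i < L, every node v with v mod 2^(i+1) = 2^i sends its partial aggregate to v - 2^i, which
  merges it into its own with the binary function g that distributivity of f provides; after L
  levels node 0 holds f of all inputs.  In broadcast level L + b, every node v < 2^b forwards the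
  result to v + 2^b, so after 2L levels every node knows it.  Aggregates have O(log n) bits, so each
  is transmitted as a constant number K of messages; since every node sends and receives at most one
  message per round, no message is ever dropped, and the run takes 2LK + 1 = O(log n) rounds.\<close>

fun encode_opt :: "bool list option \<Rightarrow> bool list" where
  "encode_opt None = []"
| "encode_opt (Some x) = True # x"

fun decode_opt :: "bool list \<Rightarrow> bool list option" where
  "decode_opt [] = None"
| "decode_opt (_ # x) = Some x"

lemma decode_encode_opt [simp]: "decode_opt (encode_opt x) = x"
  by (cases x) auto

definition chunk :: "nat \<Rightarrow> nat \<Rightarrow> 'a list \<Rightarrow> 'a list" where
  "chunk c k xs = take c (drop (k * c) xs)"

lemma length_chunk_le: "length (chunk c k xs) \<le> c"
  by (simp add: chunk_def)

lemma concat_chunks_eq_take: "concat (map (\<lambda>k. chunk c k xs) [0..<K]) = take (K * c) xs"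
proof (induction K)
  case (Suc K)
  have "take (Suc K * c) xs = take (K * c) xs @ take c (drop (K * c) xs)"
    using take_add[of "K * c" c xs] by (simp add: add.commute)
  then show ?case using Suc by (simp add: chunk_def)
qed simp

lemma concat_chunks: "length xs \<le> K * c \<Longrightarrow> concat (map (\<lambda>k. chunk c k xs) [0..<K]) = xs"
  by (simp add: concat_chunks_eq_take)

definition tree_target :: "nat \<Rightarrow> nat \<Rightarrow> nat \<Rightarrow> nat \<Rightarrow> nat option" where
  "tree_target n L i v =
     (if i < L then (if v mod 2 ^ Suc i = 2 ^ i then Some (v - 2 ^ i) else None)
      else if i < 2 * L then (if v < 2 ^ (i - L) \<and> v + 2 ^ (i - L) < n then Some (v + 2 ^ (i - L)) else None)
      else None)"

definition tree_source :: "nat \<Rightarrow> nat \<Rightarrow> nat \<Rightarrow> nat \<Rightarrow> nat option" where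
  "tree_source n L i w =
     (if i < L then (if w mod 2 ^ Suc i = 0 \<and> w + 2 ^ i < n then Some (w + 2 ^ i) else None)
      else if i < 2 * L then (if 2 ^ (i - L) \<le> w \<and> w < 2 ^ Suc (i - L) then Some (w - 2 ^ (i - L)) else None)
      else None)"

lemma tree_target_iff_source:
  assumes "v < n" "w < n"
  shows "tree_target n L i v = Some w \<longleftrightarrow> tree_source n L i w = Some v"
proof -
  consider (aggregate) "i < L" | (broadcast) "L \<le> i" "i < 2 * L" | (idle) "2 * L \<le> i"
    by linarith
  then show ?thesis
  proof cases
    case aggregate
    define p :: nat where "p = 2 ^ i"
    have "p > 0" by (simp add: p_def)
    have "(v mod (2 * p) = p \<and> w = v - p) \<longleftrightarrow> (w mod (2 * p) = 0 \<and> w + p < n \<and> v = w + p)"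
    proof
      assume a: "v mod (2 * p) = p \<and> w = v - p"
      then have v: "v = 2 * p * (v div (2 * p)) + p" by (metis mult_div_mod_eq)
      then have "w = 2 * p * (v div (2 * p))" using a by simp
      moreover have "w + p = v" using a v by linarith
      ultimately show "w mod (2 * p) = 0 \<and> w + p < n \<and> v = w + p" using assms by simp
    next
      assume "w mod (2 * p) = 0 \<and> w + p < n \<and> v = w + p"
      then show "v mod (2 * p) = p \<and> w = v - p" using \<open>p > 0\<close> by auto
    qed
    then show ?thesis using aggregate by (auto simp: tree_target_def tree_source_def p_def)
  next
    case broadcast
    then show ?thesis using assms by (auto simp: tree_target_def tree_source_def)
  next
    case idle
    then show ?thesis by (simp add: tree_target_def tree_source_def)
  qed
qed

lemma tree_target_less:
  assumes v: "v < n" and target: "tree_target n L i v = Some w"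
  shows "w < n \<and> w \<noteq> v"
proof (cases "i < L")
  case True
  with target have "v mod 2 ^ Suc i = 2 ^ i" "w = v - 2 ^ i"
    by (auto simp: tree_target_def split: if_splits)
  moreover from this(1) have "2 ^ i \<le> v" by (metis mod_less_eq_dividend)
  moreover have "(0::nat) < 2 ^ i" by simp
  ultimately show ?thesis using v by linarith
next
  case False
  with target show ?thesis by (auto simp: tree_target_def split: if_splits)
qed

lemma tree_source_less: "w < n \<Longrightarrow> tree_source n L i w = Some u \<Longrightarrow> u < n"
  by (auto simp: tree_source_def split: if_splits)

definition comb_opt :: "('a multiset \<Rightarrow> 'a) \<Rightarrow> 'a option \<Rightarrow> 'a option \<Rightarrow> 'a option" where
  "comb_opt g a b =
     (case a of None \<Rightarrow> b | Some x \<Rightarrow> (case b of None \<Rightarrow> Some x | Some y \<Rightarrow> Some (g {#x, y#})))"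

definition next_value :: "('a multiset \<Rightarrow> 'a) \<Rightarrow> nat \<Rightarrow> nat \<Rightarrow> 'a option \<Rightarrow> 'a option option \<Rightarrow> 'a option" where
  "next_value g L i val r = (case r of None \<Rightarrow> val | Some x \<Rightarrow> if i < L then comb_opt g val x else x)"

locale binomial_aggregation =
  fixes n L :: nat and f g :: "'a multiset \<Rightarrow> 'a" and A :: "nat set" and inp :: "nat \<Rightarrow> 'a"
  assumes nodes_le: "n \<le> 2 ^ L"
    and A_nodes: "A \<subseteq> {..<n}"
    and merge: "\<And>X Y. X \<noteq> {#} \<Longrightarrow> Y \<noteq> {#} \<Longrightarrow> f (X + Y) = g {#f X, f Y#}"
begin

definition agg :: "nat set \<Rightarrow> 'a option" where
  "agg X = (if X = {} then None else Some (f (image_mset inp (mset_set X))))"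

lemma agg_union:
  assumes "finite X" "finite Y" "X \<inter> Y = {}"
  shows "agg (X \<union> Y) = comb_opt g (agg X) (agg Y)"
proof (cases "X = {} \<or> Y = {}")
  case True
  then show ?thesis by (auto simp: agg_def comb_opt_def)
next
  case False
  with assms have "image_mset inp (mset_set X) \<noteq> {#}" "image_mset inp (mset_set Y) \<noteq> {#}"
    by (auto simp: mset_set_empty_iff)
  with False assms show ?thesis by (simp add: agg_def comb_opt_def mset_set_Union merge)
qed

text \<open>\<^term>\<open>held i v\<close> is the value of node \<^term>\<open>v\<close> after levels \<open>0, \<dots>, i - 1\<close>;
  \<^const>\<open>None\<close> means that no input has reached \<^term>\<open>v\<close> yet.\<close>

primrec held :: "nat \<Rightarrow> nat \<Rightarrow> 'a option" where
  "held 0 v = (if v \<in> A then Some (f {#inp v#}) else None)"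
| "held (Suc i) v = next_value g L i (held i v) (map_option (held i) (tree_source n L i v))"

lemma held_aligned: "i \<le> L \<Longrightarrow> 2 ^ i dvd v \<Longrightarrow> held i v = agg (A \<inter> {v..<v + 2 ^ i})"
proof (induction i arbitrary: v)
  case 0
  have "A \<inter> {v..<v + 1} = (if v \<in> A then {v} else {})" by auto
  then show ?case by (simp add: agg_def)
next
  case (Suc i)
  have "i < L" using Suc.prems by simp
  have "2 ^ i dvd v" by (metis Suc.prems(2) dvd_mult_right power_Suc)
  have halves: "A \<inter> {v..<v + 2 ^ Suc i} = (A \<inter> {v..<v + 2 ^ i}) \<union> (A \<inter> {v + 2 ^ i..<v + 2 ^ i + 2 ^ i})"
    by auto
  show ?case
  proof (cases "v + 2 ^ i < n")
    case True
    with \<open>i < L\<close> Suc.prems(2) have "tree_source n L i v = Some (v + 2 ^ i)"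
      by (simp add: tree_source_def)
    with \<open>i < L\<close> have "held (Suc i) v = comb_opt g (held i v) (held i (v + 2 ^ i))"
      by (simp add: next_value_def)
    also have "\<dots> = comb_opt g (agg (A \<inter> {v..<v + 2 ^ i})) (agg (A \<inter> {v + 2 ^ i..<v + 2 ^ i + 2 ^ i}))"
      using Suc.IH \<open>i < L\<close> \<open>2 ^ i dvd v\<close> by simp
    also have "\<dots> = agg (A \<inter> {v..<v + 2 ^ Suc i})"
      unfolding halves by (rule agg_union[symmetric]) auto
    finally show ?thesis .
  next
    case False
    with \<open>i < L\<close> have "held (Suc i) v = held i v"
      by (simp add: tree_source_def next_value_def)
    moreover have "A \<inter> {v + 2 ^ i..<v + 2 ^ i + 2 ^ i} = {}" using A_nodes False by auto
    ultimately show ?thesis using halves Suc.IH \<open>i < L\<close> \<open>2 ^ i dvd v\<close> by simp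
  qed
qed

lemma held_root: "held L 0 = agg A"
proof -
  have "A \<inter> {0..<0 + 2 ^ L} = A" using A_nodes nodes_le by auto
  then show ?thesis using held_aligned[of L 0] by simp
qed

lemma held_broadcast: "b \<le> L \<Longrightarrow> v < 2 ^ b \<Longrightarrow> held (L + b) v = agg A"
proof (induction b arbitrary: v)
  case 0
  then show ?case using held_root by simp
next
  case (Suc b)
  then have source: "tree_source n L (L + b) v = (if 2 ^ b \<le> v then Some (v - 2 ^ b) else None)"
    by (simp add: tree_source_def)
  show ?case
  proof (cases "2 ^ b \<le> v")
    case True
    with source have "held (L + Suc b) v = held (L + b) (v - 2 ^ b)" by (simp add: next_value_def)
    also have "\<dots> = agg A" using Suc True by simp
    finally show ?thesis .
  next
    case False
    with source have "held (L + Suc b) v = held (L + b) v" by (simp add: next_value_def)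
    also have "\<dots> = agg A" using Suc False by simp
    finally show ?thesis .
  qed
qed

lemma held_source_agg:
  assumes "w < n" "tree_source n L i w = Some u"
  shows "\<exists>X \<subseteq> A. held i u = agg X"
proof (cases "i < L")
  case True
  with assms have "u = w + 2 ^ i" "w mod 2 ^ Suc i = 0"
    by (auto simp: tree_source_def split: if_splits)
  moreover from this(2) have "2 ^ i dvd w" by (metis dvd_mult_right mod_0_imp_dvd power_Suc)
  ultimately have "2 ^ i dvd u" by simp
  with True have "held i u = agg (A \<inter> {u..<u + 2 ^ i})" by (simp add: held_aligned)
  then show ?thesis by blast
next
  case False
  with assms have "i < 2 * L" "u = w - 2 ^ (i - L)" "w < 2 ^ Suc (i - L)" "2 ^ (i - L) \<le> w"
    by (auto simp: tree_source_def split: if_splits)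
  with False have "held i u = agg A" using held_broadcast[of "i - L" u] by simp
  then show ?thesis by blast
qed

end

text \<open>A state consists of the round number in unary, the current value, and the chunks received so
  far in the current level.\<close>

definition encode_state :: "nat \<Rightarrow> bool list option \<Rightarrow> msg list \<Rightarrow> state" where
  "encode_state c val buf = replicate c True # encode_opt val # buf"

definition reassemble :: "msg list \<Rightarrow> bool list option option" where
  "reassemble buf = (if buf = [] then None else Some (decode_opt (concat buf)))"

text \<open>A node has at most one source per level, so its inbox holds at most one message.\<close>

definition first_msg :: "(nat \<times> msg) set \<Rightarrow> msg list" where
  "first_msg R = (if R = {} then [] else [snd (SOME x. x \<in> R)])"

lemma first_msg_empty [simp]: "first_msg {} = []"
  and first_msg_singleton [simp]: "first_msg {x} = [snd x]"
  by (simp_all add: first_msg_def)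

definition msg_to :: "nat option \<Rightarrow> msg \<Rightarrow> nat \<Rightarrow> msg option" where
  "msg_to target m = (\<lambda>w. if target = Some w then Some m else None)"

lemma dom_msg_to: "dom (msg_to target m) = set_option target"
  by (auto simp: msg_to_def split: if_splits)

lemma ball_ran_msg_to: "(\<forall>x\<in>ran (msg_to target m). P x) \<longleftrightarrow> (target \<noteq> None \<longrightarrow> P m)"
  by (auto simp: msg_to_def ran_def split: if_splits)

text \<open>Round \<open>c\<close> sends chunk \<open>c mod K\<close> of the value for level \<open>c div K\<close>.  A level ends at the
  first round of the next one, when its last chunk has arrived; the chunks of the source's value are
  then merged into the node's value (aggregation) or replace it (broadcast).\<close>

definition agg_bcast_step :: "nat \<Rightarrow> nat \<Rightarrow> nat \<Rightarrow> nat \<Rightarrow> (bool list multiset \<Rightarrow> bool list)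
    \<Rightarrow> nat \<Rightarrow> state \<Rightarrow> (nat \<times> msg) set \<Rightarrow> state \<times> (nat \<Rightarrow> msg option)" where
  "agg_bcast_step n cap K L g v s R =
     (let c = length (hd s); val = decode_opt (hd (tl s)); buf = tl (tl s) @ first_msg R;
          level_done = (c mod K = 0 \<and> c \<noteq> 0);
          val' = (if level_done then next_value g L (c div K - 1) val (reassemble buf) else val);
          buf' = (if level_done then [] else buf)
      in (encode_state (Suc c) val' buf',
          msg_to (tree_target n L (c div K) v) (chunk cap (c mod K) (encode_opt val'))))"

text \<open>A node starts from \<^term>\<open>f {#x#}\<close> rather than from its input \<open>x\<close>, so every value it ever
  transmits is a value of \<^term>\<open>f\<close>; this is why only the length bound on \<^term>\<open>f\<close> matters.\<close>

definition agg_bcast_alg :: "nat \<Rightarrow> nat \<Rightarrow> nat \<Rightarrow> nat \<Rightarrow> (bool list multiset \<Rightarrow> bool list)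
    \<Rightarrow> (bool list multiset \<Rightarrow> bool list) \<Rightarrow> state ncc_alg" where
  "agg_bcast_alg n cap K L f g =
     \<lparr>ncc_init = (\<lambda>v x. encode_state 0 (map_option (\<lambda>y. f {#y#}) x) []),
      ncc_step = agg_bcast_step n cap K L g,
      ncc_out = (\<lambda>s. Some (case decode_opt (hd (tl s)) of None \<Rightarrow> f {#} | Some x \<Rightarrow> x))\<rparr>"

lemma agg_bcast_alg_respects:
  assumes "1 \<le> cap"
  shows "ncc_respects n cap (agg_bcast_alg n cap K L f g) st inb T"
proof -
  have "card (set_option (tree_target n L i v)) \<le> cap" for i v
    using assms by (cases "tree_target n L i v") auto
  moreover have "v < n \<Longrightarrow> set_option (tree_target n L i v) \<subseteq> {..<n} - {v}" for i v
    using tree_target_less by fastforce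
  ultimately show ?thesis
    unfolding ncc_respects_def
    by (simp add: agg_bcast_alg_def agg_bcast_step_def Let_def dom_msg_to ball_ran_msg_to length_chunk_le)
qed

lemma ncc_exec_agrees:
  assumes exec: "ncc_exec n cap P inp st inb"
    and init: "\<And>v. v < n \<Longrightarrow> st' 0 v = ncc_init P v (inp v) \<and> inb' 0 v = {}"
    and step: "\<And>t v. v < n \<Longrightarrow> fst (ncc_step P v (st' t v) (inb' t v)) = st' (Suc t) v"
    and sent: "\<And>t w. w < n \<Longrightarrow> ncc_sent n P (st' t) (inb' t) w = inb' (Suc t) w"
    and fits: "\<And>t w. w < n \<Longrightarrow> card (inb' (Suc t) w) \<le> cap"
  shows "\<forall>v<n. st t v = st' t v \<and> inb t v = inb' t v"
proof (induction t)
  case 0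
  then show ?case using exec init by (simp add: ncc_exec_def)
next
  case (Suc t)
  then have "ncc_sent n P (st t) (inb t) w = ncc_sent n P (st' t) (inb' t) w" for w
    by (auto simp: ncc_sent_def)
  with Suc exec step sent fits show ?case by (auto simp: ncc_exec_def)
qed

locale agg_bcast_run = binomial_aggregation n L f g A inp
  for n L :: nat and f g :: "bool list multiset \<Rightarrow> bool list" and A inp +
  fixes K cap :: nat
  assumes K_pos: "1 \<le> K" and cap_pos: "1 \<le> cap"
    and values_fit: "\<And>S. S \<noteq> {#} \<Longrightarrow> S \<subseteq># image_mset inp (mset_set A) \<Longrightarrow> length (f S) < K * cap"
begin

lemma length_encode_agg:
  assumes "X \<subseteq> A"
  shows "length (encode_opt (agg X)) \<le> K * cap"
proof (cases "X = {}")
  case False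
  have "finite A" using A_nodes finite_subset by blast
  moreover from this assms have "finite X" by (rule finite_subset[rotated])
  ultimately have "mset_set X \<subseteq># mset_set A" using assms by simp
  with False \<open>finite X\<close> have "length (f (image_mset inp (mset_set X))) < K * cap"
    by (intro values_fit) (auto simp: mset_set_empty_iff image_mset_subseteq_mono)
  with False show ?thesis by (simp add: agg_def)
qed (simp add: agg_def)

definition received :: "nat \<Rightarrow> nat \<Rightarrow> nat \<Rightarrow> msg list" where
  "received i j w = (case tree_source n L i w of None \<Rightarrow> []
     | Some u \<Rightarrow> map (\<lambda>k. chunk cap k (encode_opt (held i u))) [0..<j])"

fun run_state :: "nat \<Rightarrow> nat \<Rightarrow> state" where
  "run_state 0 v = encode_state 0 (held 0 v) []"
| "run_state (Suc t) v = encode_state (Suc t) (held (t div K) v) (received (t div K) (t mod K) v)"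

fun run_inbox :: "nat \<Rightarrow> nat \<Rightarrow> (nat \<times> msg) set" where
  "run_inbox 0 w = {}"
| "run_inbox (Suc t) w = (case tree_source n L (t div K) w of None \<Rightarrow> {}
     | Some u \<Rightarrow> {(u, chunk cap (t mod K) (encode_opt (held (t div K) u)))})"

definition run_out :: "nat \<Rightarrow> nat \<Rightarrow> nat \<Rightarrow> msg option" where
  "run_out t v = msg_to (tree_target n L (t div K) v) (chunk cap (t mod K) (encode_opt (held (t div K) v)))"

lemma received_0 [simp]: "received i 0 w = []"
  by (simp add: received_def split: option.split)

lemma received_snoc_inbox:
  "received (t div K) (t mod K) w @ first_msg (run_inbox (Suc t) w) = received (t div K) (Suc (t mod K)) w"
  by (simp add: received_def split: option.split)

lemma next_value_received_all:
  assumes "w < n"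
  shows "next_value g L i (held i w) (reassemble (received i K w)) = held (Suc i) w"
proof (cases "tree_source n L i w")
  case None
  then show ?thesis by (simp add: received_def reassemble_def next_value_def)
next
  case (Some u)
  obtain X where "X \<subseteq> A" "held i u = agg X" using held_source_agg[OF assms Some] by blast
  then have "concat (received i K w) = encode_opt (held i u)"
    using Some length_encode_agg by (simp add: received_def concat_chunks)
  moreover have "received i K w \<noteq> []" using Some K_pos by (simp add: received_def)
  ultimately show ?thesis using Some by (simp add: reassemble_def)
qed

lemma agg_bcast_step_run:
  assumes "v < n"
  shows "agg_bcast_step n cap K L g v (run_state t v) (run_inbox t v) = (run_state (Suc t) v, run_out t v)"
proof (cases t)
  case 0
  show ?thesis unfolding 0 by (simp add: agg_bcast_step_def encode_state_def run_out_def)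
next
  case (Suc t')
  define i j where "i = t' div K" and "j = t' mod K"
  have buf: "received i j v @ first_msg (run_inbox t v) = received i (Suc j) v"
    unfolding i_def j_def Suc by (rule received_snoc_inbox)
  show ?thesis
  proof (cases "Suc j = K")
    case True
    then have "t mod K = 0" "t div K = Suc i"
      using Suc by (simp_all add: mod_Suc div_Suc i_def j_def)
    with True buf Suc next_value_received_all[OF assms, of i] show ?thesis
      by (simp add: agg_bcast_step_def Let_def encode_state_def run_out_def i_def j_def)
  next
    case False
    then have "t mod K = Suc j" "t div K = i"
      using Suc by (simp_all add: mod_Suc div_Suc i_def j_def)
    with buf Suc show ?thesis
      by (simp add: agg_bcast_step_def Let_def encode_state_def run_out_def i_def j_def)
  qed
qed

lemma ncc_sent_run:
  assumes "w < n"
  shows "ncc_sent n (agg_bcast_alg n cap K L f g) (run_state t) (run_inbox t) w = run_inbox (Suc t) w"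
proof -
  have "ncc_sent n (agg_bcast_alg n cap K L f g) (run_state t) (run_inbox t) w =
      {(v, m). v < n \<and> run_out t v w = Some m}"
    by (auto simp: ncc_sent_def agg_bcast_alg_def agg_bcast_step_run)
  also have "\<dots> = run_inbox (Suc t) w"
  proof (cases "tree_source n L (t div K) w")
    case None
    with assms show ?thesis by (auto simp: run_out_def msg_to_def tree_target_iff_source)
  next
    case (Some u)
    with assms have "u < n" by (rule tree_source_less)
    with assms Some show ?thesis by (auto simp: run_out_def msg_to_def tree_target_iff_source split: if_splits)
  qed
  finally show ?thesis .
qed

lemma agg_bcast_exec_eq_run:
  assumes "ncc_exec n cap (agg_bcast_alg n cap K L f g) (\<lambda>v. if v \<in> A then Some (inp v) else None) st inb"
    and "v < n"
  shows "st t v = run_state t v"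
proof -
  have "\<forall>v<n. st t v = run_state t v \<and> inb t v = run_inbox t v"
  proof (rule ncc_exec_agrees[OF assms(1)])
    show "run_state 0 v = ncc_init (agg_bcast_alg n cap K L f g) v (if v \<in> A then Some (inp v) else None)
        \<and> run_inbox 0 v = {}" for v
      by (simp add: agg_bcast_alg_def)
    show "fst (ncc_step (agg_bcast_alg n cap K L f g) v (run_state t v) (run_inbox t v)) = run_state (Suc t) v"
      if "v < n" for t v
      using that by (simp add: agg_bcast_alg_def agg_bcast_step_run)
    show "ncc_sent n (agg_bcast_alg n cap K L f g) (run_state t) (run_inbox t) w = run_inbox (Suc t) w"
      if "w < n" for t w
      using that by (rule ncc_sent_run)
    show "card (run_inbox (Suc t) w) \<le> cap" for t w
      using cap_pos by (simp split: option.split)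
  qed
  with assms(2) show ?thesis by blast
qed

text \<open>The extra round merges the chunks of the last broadcast level.\<close>

theorem agg_bcast_alg_solves:
  "ncc_solves n cap (agg_bcast_alg n cap K L f g) (\<lambda>v. if v \<in> A then Some (inp v) else None)
     (2 * L * K + 1) (f (image_mset inp (mset_set A)))"
  unfolding ncc_solves_def
proof (intro allI impI conjI)
  fix st inb
  assume exec: "ncc_exec n cap (agg_bcast_alg n cap K L f g) (\<lambda>v. if v \<in> A then Some (inp v) else None) st inb"
  show "ncc_respects n cap (agg_bcast_alg n cap K L f g) st inb (2 * L * K + 1)"
    using cap_pos by (rule agg_bcast_alg_respects)
  fix v assume "v < n"
  with nodes_le have "held (L + L) v = agg A" by (intro held_broadcast) auto
  moreover have "finite A" using A_nodes finite_subset by blast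
  ultimately show "ncc_out (agg_bcast_alg n cap K L f g) (st (2 * L * K + 1) v) = Some (f (image_mset inp (mset_set A)))"
    using agg_bcast_exec_eq_run[OF exec \<open>v < n\<close>] K_pos
    by (auto simp: agg_bcast_alg_def encode_state_def agg_def mult_2)
qed

end

definition merge_fun :: "('a multiset \<Rightarrow> 'a) \<Rightarrow> 'a multiset \<Rightarrow> 'a" where
  "merge_fun f = (SOME g. \<forall>X Y. X \<noteq> {#} \<longrightarrow> Y \<noteq> {#} \<longrightarrow> f (X + Y) = g {#f X, f Y#})"

lemma distributive_merge_fun:
  assumes "distributive f" "X \<noteq> {#}" "Y \<noteq> {#}"
  shows "f (X + Y) = merge_fun f {#f X, f Y#}"
proof -
  from assms(1) obtain g
    where g: "\<And>S Ss. sum_list Ss = S \<Longrightarrow> \<forall>X\<in>set Ss. X \<noteq> {#} \<Longrightarrow> f S = g (mset (map f Ss))"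
    unfolding distributive_def by blast
  have "f (X + Y) = g {#f X, f Y#}" if "X \<noteq> {#}" "Y \<noteq> {#}" for X Y
    using g[of "[X, Y]" "X + Y"] that by simp
  then have "\<exists>g. \<forall>X Y. X \<noteq> {#} \<longrightarrow> Y \<noteq> {#} \<longrightarrow> f (X + Y) = g {#f X, f Y#}"
    by blast
  then have "\<forall>X Y. X \<noteq> {#} \<longrightarrow> Y \<noteq> {#} \<longrightarrow> f (X + Y) = merge_fun f {#f X, f Y#}"
    unfolding merge_fun_def by (rule someI_ex)
  with assms(2,3) show ?thesis by blast
qed

lemma ncc_cap_ge: "\<kappa> * log 2 (real n) \<le> real (ncc_cap \<kappa> n)"
  unfolding ncc_cap_def by (rule real_nat_ceiling_ge)

lemma ncc_cap_pos:
  assumes "\<kappa> > 0" "2 \<le> n"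
  shows "1 \<le> ncc_cap \<kappa> n"
proof -
  have "0 < \<kappa> * log 2 (real n)" using assms by simp
  then show ?thesis by (simp add: ncc_cap_def le_nat_iff)
qed

lemma length_less_chunks_times_cap:
  assumes "\<kappa> > 0" "2 \<le> n" "real m \<le> d * log 2 (real n)"
  shows "m < (nat \<lceil>d / \<kappa>\<rceil> + 1) * ncc_cap \<kappa> n"
proof -
  define l where "l = log 2 (real n)"
  have "0 < \<kappa> * l" using assms(1,2) by (simp add: l_def)
  have "real m \<le> d / \<kappa> * (\<kappa> * l)" using assms(1,3) by (simp add: l_def)
  also have "\<dots> < (d / \<kappa> + 1) * (\<kappa> * l)" using \<open>0 < \<kappa> * l\<close> by (simp add: distrib_right)
  also have "\<dots> \<le> real ((nat \<lceil>d / \<kappa>\<rceil> + 1) * ncc_cap \<kappa> n)"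
    unfolding of_nat_mult using real_nat_ceiling_ge[of "d / \<kappa>"] ncc_cap_ge[of \<kappa> n] \<open>0 < \<kappa> * l\<close>
    by (intro mult_mono) (auto simp: l_def)
  finally show ?thesis by (rule of_nat_less_imp_less)
qed

lemma rounds_le_log:
  assumes "2 \<le> n"
  shows "real (2 * ceillog2 n * K + 1) \<le> (4 * real K + 1) * log 2 (real n)"
proof -
  define l where "l = log 2 (real n)"
  have "1 \<le> l" using assms by (simp add: l_def)
  moreover have "real (ceillog2 n) < l + 1" using assms by (simp add: l_def ceillog2_less_log)
  with \<open>1 \<le> l\<close> have "real (ceillog2 n) \<le> 2 * l" by linarith
  then have "real (ceillog2 n) * real K \<le> 2 * l * real K" by (rule mult_right_mono) simp
  ultimately show ?thesis by (simp add: l_def algebra_simps)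
qed

lemma agg_bcast_alg_solves_ncc_cap:
  assumes "\<kappa> > 0" "2 \<le> n" "distributive f" "A \<subseteq> {..<n}"
    and f_small: "\<And>S. S \<noteq> {#} \<Longrightarrow> S \<subseteq># image_mset inp (mset_set A) \<Longrightarrow>
      real (length (f S)) \<le> d * log 2 (real n)"
  defines "K \<equiv> nat \<lceil>d / \<kappa>\<rceil> + 1"
  shows "ncc_solves n (ncc_cap \<kappa> n) (agg_bcast_alg n (ncc_cap \<kappa> n) K (ceillog2 n) f (merge_fun f))
    (\<lambda>v. if v \<in> A then Some (inp v) else None) (2 * ceillog2 n * K + 1) (f (image_mset inp (mset_set A)))"
proof -
  interpret agg_bcast_run n "ceillog2 n" f "merge_fun f" A inp K "ncc_cap \<kappa> n"
  proof
    show "n \<le> 2 ^ ceillog2 n" by (rule le_two_power_ceillog2)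
    show "X \<noteq> {#} \<Longrightarrow> Y \<noteq> {#} \<Longrightarrow> f (X + Y) = merge_fun f {#f X, f Y#}" for X Y
      using assms(3) by (rule distributive_merge_fun)
    show "1 \<le> ncc_cap \<kappa> n" using assms(1,2) by (rule ncc_cap_pos)
    show "length (f S) < K * ncc_cap \<kappa> n" if "S \<noteq> {#}" "S \<subseteq># image_mset inp (mset_set A)" for S
      unfolding K_def using assms(1,2) f_small[OF that] by (rule length_less_chunks_times_cap)
  qed (use assms(4) K_def in simp_all)
  show ?thesis by (rule agg_bcast_alg_solves)
qed

theorem theorem2p2:
  fixes \<kappa> d :: real
  assumes "\<kappa> > 0"
  shows "\<exists>(C::real) (alg :: nat \<Rightarrow> (bool list multiset \<Rightarrow> bool list) \<Rightarrow> state ncc_alg).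
    \<forall>n \<ge> 2. \<forall>(f :: bool list multiset \<Rightarrow> bool list) (A :: nat set) (inp :: nat \<Rightarrow> bool list).
      distributive f \<and> A \<subseteq> {..<n} \<and>
      (\<forall>v\<in>A. real (length (inp v)) \<le> d * log 2 (real n)) \<and>
      (\<forall>S. S \<noteq> {#} \<and> S \<subseteq># image_mset inp (mset_set A) \<longrightarrow>
           real (length (f S)) \<le> d * log 2 (real n))
      \<longrightarrow> (\<exists>T::nat. real T \<le> C * log 2 (real n) \<and>
             ncc_solves n (ncc_cap \<kappa> n) (alg n f)
               (\<lambda>v. if v \<in> A then Some (inp v) else None) T
               (f (image_mset inp (mset_set A))))"
proof -
  define K where "K = nat \<lceil>d / \<kappa>\<rceil> + 1"
  show ?thesis
  proof (intro exI allI impI conjI)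
    fix n :: nat and f :: "bool list multiset \<Rightarrow> bool list" and A :: "nat set" and inp :: "nat \<Rightarrow> bool list"
    assume "2 \<le> n" and hyps: "distributive f \<and> A \<subseteq> {..<n} \<and>
        (\<forall>v\<in>A. real (length (inp v)) \<le> d * log 2 (real n)) \<and>
        (\<forall>S. S \<noteq> {#} \<and> S \<subseteq># image_mset inp (mset_set A) \<longrightarrow> real (length (f S)) \<le> d * log 2 (real n))"
    show "real (2 * ceillog2 n * K + 1) \<le> (4 * real K + 1) * log 2 (real n)"
      using \<open>2 \<le> n\<close> by (rule rounds_le_log)
    show "ncc_solves n (ncc_cap \<kappa> n) (agg_bcast_alg n (ncc_cap \<kappa> n) K (ceillog2 n) f (merge_fun f))
        (\<lambda>v. if v \<in> A then Some (inp v) else None) (2 * ceillog2 n * K + 1) (f (image_mset inp (mset_set A)))"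
      unfolding K_def using assms \<open>2 \<le> n\<close> hyps by (intro agg_bcast_alg_solves_ncc_cap) auto
  qed
qed

end
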